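(* Let $n,m$ be positive integers and $\pi\in S_n$. Then $x_m(\pi)=\dfrac{\Omega_\pi(m)}{(2m+1)^n}$, $x^*_m(\pi)=\dfrac{\Omega^*_\pi(m)}{(2m)^n}$, $x^+_m(\pi)=\dfrac{\Omega^+_\pi(m)}{m^n}$, and moreover $y_m(\pi)=x_m(\pi^{-1})$, $y^*_m(\pi)=x^*_m(\pi^{-1})$, $y^+_m(\pi)=x^+_m(\pi^{-1})$.
   Context: Integers are written with $\bar i=-i$, ordered $0<_{\mathbb Z}\bar1<_{\mathbb Z}1<_{\mathbb Z}\bar2<_{\mathbb Z}2<_{\mathbb Z}\cdots$, $|\bar j|=j$. Write $a\prec_+ b$ if $a<_{\mathbb Z}b$ or $a=b\in\{0,1,2,\ldots\}$, and $a\prec_- b$ if $a<_{\mathbb Z}b$ or $a=b\in\{\bar1,\bar2,\ldots\}$. For $\pi\in S_n$, a $\pi$-partition is $f:[n]\to\mathbb Z$ with, for each $1\le i<n$, $f(\pi(i))\prec_+ f(\pi(i+1))$ if $\pi(i)<\pi(i+1)$ and $f(\pi(i))\prec_- f(\pi(i+1))$ if $\pi(i)>\pi(i+1)$. $\Omega_\pi(m)$ counts $\pi$-partitions with $|f(i)|\le m$; $\Omega^*_\pi(m)$ counts those also never equal to $0$; $\Omega^+_\pi(m)$ counts those with values in $\{1,\ldots,m\}$. Shelf shufflers: a deck of cards labeled $1,\ldots,n$ top to bottom; cards are taken in order $1,\ldots,n$, each independently placed. Lazy mode: each card chooses uniformly among $2m+1$ options: shelf $0$ (placed below the cards already there), or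 shelf $j\in\{1,\ldots,m\}$ on top of, or below, the cards already there. Standard mode: same without shelf $0$ ($2m$ options). Strict mode: uniformly one of shelves $1,\ldots,m$, always placed below the cards already there. Finally piles are stacked with shelf $0$ (if present) on top, then shelf $1$, ..., shelf $m$; the result is the permutation $\pi$ with $\pi(i)$ the card in position $i$ from the top. $x_m(\pi),x^*_m(\pi),x^+_m(\pi)$ are the probabilities of obtaining $\pi$ in lazy, standard, strict mode. Riffle shuffles: for a weak composition $A$ of $n$ into $r$ parts, chosen with multinomial probability $\binom{n}{A}/r^n$, cut the deck $1,\ldots,n$ into consecutive piles of these sizes, then interleave the piles, each of the $\binom nA$ interleavings (keeping each pile's internal order) being equally likely; $\pi(i)$ is the card in position $i$. Classic $m$-riffle: $r=m$, no piles reversed. Down-up $m$-riffle: $r=2m$, piles $1,3,5,\ldots$ reversed. Up-down $m$-riffle: $r=2m+1$, piles $2,4,6,\ldots$ reversed. $y^+_m(\pi)$, $y^*_m(\pi)$, $y_m(\pi)$ denote the probabilities of obtaining $\pi$ from a classic, down-up, up-down $m$-riffle shuffle respectively. *)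

theory Defs
  imports "HOL-Combinatorics.Permutations" "HOL-Library.FuncSet" Complex_Main
begin

text \<open>Rank realising the order 0 < -1 < 1 < -2 < 2 < ... .\<close>
definition zrank :: "int \<Rightarrow> nat" where
  "zrank a = (if a = 0 then 0 else if a < 0 then 2 * nat (-a) - 1 else 2 * nat a)"

definition zless :: "int \<Rightarrow> int \<Rightarrow> bool" where
  "zless a b \<longleftrightarrow> zrank a < zrank b"

definition prec_plus :: "int \<Rightarrow> int \<Rightarrow> bool" where
  "prec_plus a b \<longleftrightarrow> zless a b \<or> (a = b \<and> a \<ge> 0)"

definition prec_minus :: "int \<Rightarrow> int \<Rightarrow> bool" where
  "prec_minus a b \<longleftrightarrow> zless a b \<or> (a = b \<and> a < 0)"

definition is_pi_partition :: "nat \<Rightarrow> (nat \<Rightarrow> nat) \<Rightarrow> (nat \<Rightarrow> int) \<Rightarrow> bool" where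
  "is_pi_partition n \<pi> f \<longleftrightarrow>
     (\<forall>i. 1 \<le> i \<and> i < n \<longrightarrow>
        (\<pi> i < \<pi> (i+1) \<longrightarrow> prec_plus (f (\<pi> i)) (f (\<pi> (i+1)))) \<and>
        (\<pi> i > \<pi> (i+1) \<longrightarrow> prec_minus (f (\<pi> i)) (f (\<pi> (i+1)))))"

definition Omega :: "nat \<Rightarrow> (nat \<Rightarrow> nat) \<Rightarrow> nat \<Rightarrow> nat" where
  "Omega n \<pi> m = card {f \<in> {1..n} \<rightarrow>\<^sub>E {-int m..int m}. is_pi_partition n \<pi> f}"

definition Omega_star :: "nat \<Rightarrow> (nat \<Rightarrow> nat) \<Rightarrow> nat \<Rightarrow> nat" where
  "Omega_star n \<pi> m = card {f \<in> {1..n} \<rightarrow>\<^sub>E ({-int m..int m} - {0}). is_pi_partition n \<pi> f}"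

definition Omega_plus :: "nat \<Rightarrow> (nat \<Rightarrow> nat) \<Rightarrow> nat \<Rightarrow> nat" where
  "Omega_plus n \<pi> m = card {f \<in> {1..n} \<rightarrow>\<^sub>E {1..int m}. is_pi_partition n \<pi> f}"

text \<open>A choice for a card is a pair (shelf, on_top). Shelf 0 only with on_top = False
  (placed below). on_top = True: placed on top of the cards already on the shelf.\<close>

definition lazy_opts :: "nat \<Rightarrow> (nat \<times> bool) set" where
  "lazy_opts m = {(0, False)} \<union> ({1..m} \<times> UNIV)"

definition std_opts :: "nat \<Rightarrow> (nat \<times> bool) set" where
  "std_opts m = {1..m} \<times> UNIV"

definition strict_opts :: "nat \<Rightarrow> (nat \<times> bool) set" where
  "strict_opts m = {1..m} \<times> {False}"

definition shelf_step :: "(nat \<Rightarrow> nat \<times> bool) \<Rightarrow> (nat \<Rightarrow> nat list) \<Rightarrow> nat \<Rightarrow> (nat \<Rightarrow> nat list)" where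
  "shelf_step c sh k = (case c k of (j, t) \<Rightarrow> sh(j := (if t then k # sh j else sh j @ [k])))"

text \<open>Cards 1..n are processed in order; finally shelves 0,1,...,m are stacked top to bottom.\<close>
definition shelf_deck :: "nat \<Rightarrow> nat \<Rightarrow> (nat \<Rightarrow> nat \<times> bool) \<Rightarrow> nat list" where
  "shelf_deck n m c = concat (map (foldl (shelf_step c) (\<lambda>_. []) [1..<n+1]) [0..<m+1])"

text \<open>The permutation pi as the deck list (pi 1, ..., pi n), top to bottom.\<close>
definition perm_list :: "nat \<Rightarrow> (nat \<Rightarrow> nat) \<Rightarrow> nat list" where
  "perm_list n \<pi> = map \<pi> [1..<n+1]"

definition shelf_prob :: "(nat \<times> bool) set \<Rightarrow> nat \<Rightarrow> nat \<Rightarrow> (nat \<Rightarrow> nat) \<Rightarrow> real" where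
  "shelf_prob opts n m \<pi> =
     real (card {c \<in> {1..n} \<rightarrow>\<^sub>E opts. shelf_deck n m c = perm_list n \<pi>}) / real (card opts) ^ n"

definition x_lazy :: "nat \<Rightarrow> nat \<Rightarrow> (nat \<Rightarrow> nat) \<Rightarrow> real" where
  "x_lazy n m \<pi> = shelf_prob (lazy_opts m) n m \<pi>"

definition x_std :: "nat \<Rightarrow> nat \<Rightarrow> (nat \<Rightarrow> nat) \<Rightarrow> real" where
  "x_std n m \<pi> = shelf_prob (std_opts m) n m \<pi>"

definition x_strict :: "nat \<Rightarrow> nat \<Rightarrow> (nat \<Rightarrow> nat) \<Rightarrow> real" where
  "x_strict n m \<pi> = shelf_prob (strict_opts m) n m \<pi>"

definition weak_comps :: "nat \<Rightarrow> nat \<Rightarrow> nat list set" where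
  "weak_comps n r = {A. length A = r \<and> sum_list A = n}"

definition multinom :: "nat \<Rightarrow> nat list \<Rightarrow> nat" where
  "multinom n A = fact n div prod_list (map fact A)"

definition pile :: "(nat \<Rightarrow> bool) \<Rightarrow> nat list \<Rightarrow> nat \<Rightarrow> nat list" where
  "pile rv A i = (let s = sum_list (take i A); p = [s+1..<s + A ! i + 1]
                  in if rv i then rev p else p)"

definition piles :: "(nat \<Rightarrow> bool) \<Rightarrow> nat list \<Rightarrow> nat list list" where
  "piles rv A = map (pile rv A) [0..<length A]"

definition interleavings :: "nat list list \<Rightarrow> nat list set" where
  "interleavings Ls = foldr (\<lambda>xs S. \<Union>ys\<in>S. shuffles xs ys) Ls {[]}"

definition riffle_prob :: "nat \<Rightarrow> (nat \<Rightarrow> bool) \<Rightarrow> nat \<Rightarrow> (nat \<Rightarrow> nat) \<Rightarrow> real" where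
  "riffle_prob r rv n \<pi> =
     (\<Sum>A\<in>weak_comps n r. (real (multinom n A) / real r ^ n) *
        ((if perm_list n \<pi> \<in> interleavings (piles rv A) then 1 else 0)
          / real (card (interleavings (piles rv A)))))"

text \<open>Classic: r = m, no pile reversed. Down-up: r = 2m, piles 1,3,5,... (1-indexed)
  reversed, i.e. 0-indexed even. Up-down: r = 2m+1, piles 2,4,6,... reversed, i.e.
  0-indexed odd.\<close>
definition y_plus :: "nat \<Rightarrow> nat \<Rightarrow> (nat \<Rightarrow> nat) \<Rightarrow> real" where
  "y_plus n m \<pi> = riffle_prob m (\<lambda>_. False) n \<pi>"

definition y_star :: "nat \<Rightarrow> nat \<Rightarrow> (nat \<Rightarrow> nat) \<Rightarrow> real" where
  "y_star n m \<pi> = riffle_prob (2*m) (\<lambda>i. even i) n \<pi>"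

definition y_lazy :: "nat \<Rightarrow> nat \<Rightarrow> (nat \<Rightarrow> nat) \<Rightarrow> real" where
  "y_lazy n m \<pi> = riffle_prob (2*m+1) (\<lambda>i. odd i) n \<pi>"

end

(*
  Record a run of a shelf shuffler by the value f k of each card k: the shelf j if the card went
  below the cards already on shelf j, and -j if it went on top of them (shelf 0 gives 0).
  Stacking the shelves lists the cards by increasing key: first the rank of f k in the order
  0 < -1 < 1 < -2 < 2 < ..., then k or -k according to the sign of f k. Compared along adjacent
  positions, this key order is exactly the \<pi>-partition condition, so f is a \<pi>-partition iff
  the deck \<pi> is sorted by the key of f. A deck sorted by an injective key is determined by its
  set of cards, hence the runs producing \<pi> correspond bijectively to the \<pi>-partitions with
  values in the range of the mode.

  For a riffle shuffle with cut A, label every card by its pile. The deck \<pi> is an interleaving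
  of the piles iff the labels increase weakly from card 1 to card n and consecutive cards of one
  pile keep (or, for a reversed pile, reverse) their order in the deck, i.e. under inv \<pi>.
  Naming pile i by the i-th admissible value in the order above turns these labellings into
  inv \<pi>-partitions, the reversed piles being those with negative values. Given the cut, each
  interleaving has probability 1 / multinom n A, which cancels the probability
  multinom n A / r ^ n of the cut, so every cut producing \<pi> contributes exactly 1 / r ^ n.
*)

theory Submission
  imports Defs "HOL-Library.Product_Lexorder"
begin

declare upt_Suc [simp del]

lemma zrank_of_nat [simp]: "zrank (int k) = 2 * k"
  by (simp add: zrank_def)

lemma zrank_uminus_of_nat [simp]: "zrank (- int k) = 2 * k - 1"
  by (simp add: zrank_def)

definition zunrank :: "nat \<Rightarrow> int" where
  "zunrank k = (if even k then int (k div 2) else - int (Suc (k div 2)))"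

lemma zrank_zunrank [simp]: "zrank (zunrank k) = k"
  by (simp add: zunrank_def del: of_nat_Suc)

lemma zunrank_zrank [simp]: "zunrank (zrank a) = a"
  by (cases a rule: int_cases2) (auto simp: zunrank_def elim: oddE)

lemma zrank_eq_iff: "zrank a = zrank b \<longleftrightarrow> a = b"
  by (metis zunrank_zrank)

lemma zunrank_less_0_iff: "zunrank k < 0 \<longleftrightarrow> odd k"
  by (simp add: zunrank_def)

lemma image_zunrank_eq_vimage: "zunrank ` K = zrank -` K"
  by (auto intro: image_eqI[where x = "zrank a" for a])

lemma image_zunrank_lazy: "zunrank ` {0..<2 * m + 1} = {- int m..int m}"
proof -
  have rank_range: "zrank a \<in> {0..<2 * m + 1} \<longleftrightarrow> a \<in> {- int m..int m}" for a
    by (cases a rule: int_cases2) auto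
  show ?thesis
    by (simp only: image_zunrank_eq_vimage vimage_def rank_range Collect_mem_eq)
qed

lemma image_zunrank_Suc_std: "(\<lambda>i. zunrank (Suc i)) ` {0..<2 * m} = {- int m..int m} - {0}"
proof -
  have rank_range: "zrank a \<in> {1..<2 * m + 1} \<longleftrightarrow> a \<in> {- int m..int m} - {0}" for a
    by (cases a rule: int_cases2) auto
  have "(\<lambda>i. zunrank (Suc i)) ` {0..<2 * m} = zunrank ` Suc ` {0..<2 * m}"
    by (simp only: image_image)
  also have "Suc ` {0..<2 * m} = {1..<2 * m + 1}"
    by simp
  also have "zunrank ` \<dots> = {- int m..int m} - {0}"
    by (simp only: image_zunrank_eq_vimage vimage_def rank_range Collect_mem_eq)
  finally show ?thesis .
qed

lemma image_of_nat_plus_1_strict: "(\<lambda>i. int i + 1) ` {0..<m} = {1..int m}"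
proof (intro equalityI subsetI)
  fix a :: int assume "a \<in> {1..int m}"
  then have "a = int (nat (a - 1)) + 1" "nat (a - 1) \<in> {0..<m}"
    by auto
  then show "a \<in> (\<lambda>i. int i + 1) ` {0..<m}"
    by blast
qed auto

lemma inj_on_of_zless_iff:
  fixes val :: "nat \<Rightarrow> int"
  assumes "\<And>a b. a < r \<Longrightarrow> b < r \<Longrightarrow> zless (val a) (val b) \<longleftrightarrow> a < b"
  shows "inj_on val {0..<r}"
proof (rule inj_onI)
  fix a b assume "a \<in> {0..<r}" "b \<in> {0..<r}" "val a = val b"
  then show "a = b"
    using assms[of a b] assms[of b a] by (cases a b rule: linorder_cases) (auto simp: zless_def)
qed

lemma prec_val_iff:
  fixes val :: "nat \<Rightarrow> int"
  assumes val_less: "\<And>a b. a < r \<Longrightarrow> b < r \<Longrightarrow> zless (val a) (val b) \<longleftrightarrow> a < b"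
    and "a < r" and "b < r"
  shows "prec_plus (val a) (val b) \<longleftrightarrow> a < b \<or> (a = b \<and> \<not> val a < 0)"
    and "prec_minus (val a) (val b) \<longleftrightarrow> a < b \<or> (a = b \<and> val a < 0)"
proof -
  have "val a = val b \<longleftrightarrow> a = b"
    using inj_on_eq_iff[OF inj_on_of_zless_iff[OF val_less]] assms(2,3) by simp
  then show "prec_plus (val a) (val b) \<longleftrightarrow> a < b \<or> (a = b \<and> \<not> val a < 0)"
    "prec_minus (val a) (val b) \<longleftrightarrow> a < b \<or> (a = b \<and> val a < 0)"
    using val_less[OF assms(2,3)] by (auto simp: prec_plus_def prec_minus_def)
qed

lemma sorted_wrt_key_unique:
  fixes key :: "'a \<Rightarrow> 'b::linorder"
  assumes "sorted_wrt (\<lambda>x y. key x < key y) xs" "sorted_wrt (\<lambda>x y. key x < key y) ys"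
    and "set xs = set ys" and "inj_on key (set xs)"
  shows "xs = ys"
proof -
  have "sorted_wrt (<) (map key xs)" "sorted_wrt (<) (map key ys)"
    using assms(1,2) by (simp_all add: sorted_wrt_map)
  then have "map key xs = map key ys"
    using assms(3) by (intro sorted_distinct_set_unique) (auto simp: strict_sorted_iff)
  then show ?thesis
    using assms(3,4) by (metis inj_on_map_eq_map sup.idem)
qed

lemma sorted_wrt_map_upt_iff_adjacent:
  assumes "transp R"
  shows "sorted_wrt R (map g [a..<b]) \<longleftrightarrow> (\<forall>k. a \<le> k \<and> Suc k < b \<longrightarrow> R (g k) (g (Suc k)))"
  unfolding sorted_wrt_iff_nth_Suc_transp[OF assms]
proof safe
  fix k
  assume adj: "\<forall>i. Suc i < length (map g [a..<b]) \<longrightarrow>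
                     R (map g [a..<b] ! i) (map g [a..<b] ! Suc i)"
    and k: "a \<le> k" "Suc k < b"
  from adj[rule_format, of "k - a"] k show "R (g k) (g (Suc k))"
    by (simp add: Suc_diff_le)
next
  fix i assume adj: "\<forall>k. a \<le> k \<and> Suc k < b \<longrightarrow> R (g k) (g (Suc k))"
    and i: "Suc i < length (map g [a..<b])"
  then have "map g [a..<b] ! i = g (a + i)" "map g [a..<b] ! Suc i = g (Suc (a + i))"
    by simp_all
  with adj i show "R (map g [a..<b] ! i) (map g [a..<b] ! Suc i)"
    by simp
qed

lemma sorted_wrt_concat_map_upt:
  assumes "\<And>j. j < k \<Longrightarrow> sorted_wrt R (B j)"
    and "\<And>j j' x y. j < j' \<Longrightarrow> j' < k \<Longrightarrow> x \<in> set (B j) \<Longrightarrow> y \<in> set (B j') \<Longrightarrow> R x y"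
  shows "sorted_wrt R (concat (map B [0..<k]))"
  using assms by (induction k) (auto simp: sorted_wrt_append upt_Suc_append)

lemma card_filter_bij_betw:
  assumes "bij_betw h A B"
  shows "card {a \<in> A. P (h a)} = card {b \<in> B. P b}"
proof -
  have "{b \<in> B. P b} = h ` {a \<in> A. P (h a)}"
    using assms by (auto simp: bij_betw_def)
  moreover have "inj_on h {a \<in> A. P (h a)}"
    using assms by (auto simp: bij_betw_def intro: inj_on_subset)
  ultimately show ?thesis
    by (simp add: card_image)
qed

lemma bij_betw_PiE_reindex:
  assumes \<tau>: "bij_betw \<tau> I I" and g: "bij_betw g X Y"
  shows "bij_betw (\<lambda>p. \<lambda>x\<in>I. g (p (\<tau> x))) (I \<rightarrow>\<^sub>E X) (I \<rightarrow>\<^sub>E Y)"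
proof (rule bij_betw_byWitness[where f' = "\<lambda>f. \<lambda>k\<in>I. inv_into X g (f (inv_into I \<tau> k))"])
  note \<tau>_simps = bij_betw_apply[OF \<tau>] bij_betw_apply[OF bij_betw_inv_into[OF \<tau>]]
    bij_betw_inv_into_left[OF \<tau>] bij_betw_inv_into_right[OF \<tau>]
  note g_simps = bij_betw_apply[OF g] bij_betw_inv_into_left[OF g]
  note g_inv_simps = bij_betw_apply[OF bij_betw_inv_into[OF g]] bij_betw_inv_into_right[OF g]
  show "\<forall>p\<in>I \<rightarrow>\<^sub>E X. (\<lambda>k\<in>I. inv_into X g ((\<lambda>x\<in>I. g (p (\<tau> x))) (inv_into I \<tau> k))) = p"
  proof (intro ballI ext)
    fix p k assume p: "p \<in> I \<rightarrow>\<^sub>E X"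
    show "(\<lambda>k\<in>I. inv_into X g ((\<lambda>x\<in>I. g (p (\<tau> x))) (inv_into I \<tau> k))) k = p k"
      by (cases "k \<in> I") (simp_all add: \<tau>_simps g_simps PiE_mem[OF p] PiE_arb[OF p])
  qed
  show "\<forall>f\<in>I \<rightarrow>\<^sub>E Y. (\<lambda>x\<in>I. g ((\<lambda>k\<in>I. inv_into X g (f (inv_into I \<tau> k))) (\<tau> x))) = f"
  proof (intro ballI ext)
    fix f x assume f: "f \<in> I \<rightarrow>\<^sub>E Y"
    show "(\<lambda>x\<in>I. g ((\<lambda>k\<in>I. inv_into X g (f (inv_into I \<tau> k))) (\<tau> x))) x = f x"
      by (cases "x \<in> I") (simp_all add: \<tau>_simps g_inv_simps PiE_mem[OF f] PiE_arb[OF f])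
  qed
  show "(\<lambda>p. \<lambda>x\<in>I. g (p (\<tau> x))) ` (I \<rightarrow>\<^sub>E X) \<subseteq> I \<rightarrow>\<^sub>E Y"
  proof (rule image_subsetI)
    fix p assume p: "p \<in> I \<rightarrow>\<^sub>E X"
    show "(\<lambda>x\<in>I. g (p (\<tau> x))) \<in> I \<rightarrow>\<^sub>E Y"
      by (simp add: \<tau>_simps g_simps PiE_mem[OF p])
  qed
  show "(\<lambda>f. \<lambda>k\<in>I. inv_into X g (f (inv_into I \<tau> k))) ` (I \<rightarrow>\<^sub>E Y) \<subseteq> I \<rightarrow>\<^sub>E X"
  proof (rule image_subsetI)
    fix f assume f: "f \<in> I \<rightarrow>\<^sub>E Y"
    show "(\<lambda>k\<in>I. inv_into X g (f (inv_into I \<tau> k))) \<in> I \<rightarrow>\<^sub>E X"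
      by (simp add: \<tau>_simps g_inv_simps PiE_mem[OF f])
  qed
qed

lemma set_perm_list: "\<pi> permutes {1..n} \<Longrightarrow> set (perm_list n \<pi>) = {1..n}"
  unfolding perm_list_def by (simp add: atLeastLessThanSuc_atLeastAtMost permutes_image)

lemma distinct_perm_list: "\<pi> permutes {1..n} \<Longrightarrow> distinct (perm_list n \<pi>)"
  unfolding perm_list_def by (simp add: distinct_map permutes_inj_on)

lemma sorted_wrt_inv_perm_list:
  "\<pi> permutes {1..n} \<Longrightarrow> sorted_wrt (\<lambda>x y. inv \<pi> x < inv \<pi> y) (perm_list n \<pi>)"
  unfolding perm_list_def sorted_wrt_map
  by (rule sorted_wrt_mono_rel[OF _ sorted_wrt_upt]) (simp add: permutes_inverses(2))

text \<open>Sorting cards by this key lists equal values in increasing order when they are in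
  \<open>{0, 1, 2, ...}\<close> and in decreasing order when they are in \<open>{-1, -2, ...}\<close>, exactly as
  \<^const>\<open>prec_plus\<close> and \<^const>\<open>prec_minus\<close> demand of adjacent positions.\<close>
definition card_key :: "(nat \<Rightarrow> int) \<Rightarrow> nat \<Rightarrow> nat \<times> int" where
  "card_key f x = (zrank (f x), if f x < 0 then - int x else int x)"

lemma inj_on_card_key: "inj_on (card_key f) A"
  by (rule inj_onI) (auto simp: card_key_def zrank_eq_iff split: if_splits)

lemma card_key_less_iff:
  assumes "a \<noteq> b"
  shows "card_key f a < card_key f b \<longleftrightarrow>
           (a < b \<longrightarrow> prec_plus (f a) (f b)) \<and> (b < a \<longrightarrow> prec_minus (f a) (f b))"
proof (cases "f a = f b")
  case True
  with assms show ?thesis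
    by (auto simp: card_key_def prec_plus_def prec_minus_def zless_def)
next
  case False
  then have "zrank (f a) \<noteq> zrank (f b)"
    by (simp add: zrank_eq_iff)
  with assms False show ?thesis
    by (auto simp: card_key_def prec_plus_def prec_minus_def zless_def)
qed

lemma is_pi_partition_iff_sorted:
  assumes "inj_on \<pi> {1..n}"
  shows "is_pi_partition n \<pi> f \<longleftrightarrow>
           sorted_wrt (\<lambda>x y. card_key f x < card_key f y) (perm_list n \<pi>)"
proof -
  have "sorted_wrt (\<lambda>x y. card_key f x < card_key f y) (perm_list n \<pi>) \<longleftrightarrow>
          (\<forall>k. 1 \<le> k \<and> Suc k < n + 1 \<longrightarrow> card_key f (\<pi> k) < card_key f (\<pi> (Suc k)))"
    unfolding perm_list_def by (rule sorted_wrt_map_upt_iff_adjacent) (auto intro: transpI)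
  also have "\<dots> \<longleftrightarrow> is_pi_partition n \<pi> f"
    unfolding is_pi_partition_def
  proof (intro iff_allI)
    fix k
    have "\<pi> k \<noteq> \<pi> (Suc k)" if "1 \<le> k" "k < n"
      using assms that by (auto dest: inj_onD)
    then show "(1 \<le> k \<and> Suc k < n + 1 \<longrightarrow> card_key f (\<pi> k) < card_key f (\<pi> (Suc k))) \<longleftrightarrow>
      (1 \<le> k \<and> k < n \<longrightarrow> (\<pi> k < \<pi> (k + 1) \<longrightarrow> prec_plus (f (\<pi> k)) (f (\<pi> (k + 1)))) \<and>
          (\<pi> (k + 1) < \<pi> k \<longrightarrow> prec_minus (f (\<pi> k)) (f (\<pi> (k + 1)))))"
      using card_key_less_iff[of "\<pi> k" "\<pi> (Suc k)" f] by auto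
  qed
  finally show ?thesis ..
qed

lemma is_pi_partition_cong:
  assumes "\<pi> permutes {1..n}" and "\<And>x. x \<in> {1..n} \<Longrightarrow> f x = g x"
  shows "is_pi_partition n \<pi> f \<longleftrightarrow> is_pi_partition n \<pi> g"
proof -
  have "f (\<pi> i) = g (\<pi> i)" if "1 \<le> i" "i \<le> n" for i
    using assms permutes_in_image[OF assms(1)] that by auto
  then show ?thesis
    unfolding is_pi_partition_def by (intro iff_allI) auto
qed

section \<open>Shelf shufflers\<close>

lemma foldl_shelf_step:
  "foldl (shelf_step c) (\<lambda>_. []) xs =
     (\<lambda>j. rev (filter (\<lambda>i. c i = (j, True)) xs) @ filter (\<lambda>i. c i = (j, False)) xs)"
proof (induction xs rule: rev_induct)
  case (snoc x xs)
  show ?case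
    unfolding foldl_append foldl.simps snoc.IH
    by (rule ext) (auto simp: shelf_step_def split: prod.split)
qed simp

lemma shelf_deck_eq:
  "shelf_deck n m c = concat (map (\<lambda>j. rev (filter (\<lambda>i. c i = (j, True)) [1..<n+1])
                                      @ filter (\<lambda>i. c i = (j, False)) [1..<n+1]) [0..<m+1])"
  unfolding shelf_deck_def foldl_shelf_step ..

definition choice_value :: "nat \<times> bool \<Rightarrow> int" where
  "choice_value p = (if snd p then - int (fst p) else int (fst p))"

lemma card_key_choice_value:
  assumes "c x \<in> lazy_opts m"
  shows "card_key (choice_value \<circ> c) x =
           (if snd (c x) then (2 * fst (c x) - 1, - int x) else (2 * fst (c x), int x))"
  using assms by (auto simp: lazy_opts_def card_key_def choice_value_def)

lemma shelf_deck_sorted: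
  assumes c: "c \<in> {1..n} \<rightarrow> lazy_opts m"
  shows "sorted_wrt (\<lambda>x y. card_key (choice_value \<circ> c) x < card_key (choice_value \<circ> c) y)
           (shelf_deck n m c)"
proof -
  let ?key = "card_key (choice_value \<circ> c)"
  have key: "?key x = (if snd (c x) then (2 * fst (c x) - 1, - int x) else (2 * fst (c x), int x))"
    if "x \<in> {1..n}" for x
    by (rule card_key_choice_value[of c x m, OF Pi_mem[OF c that]])
  have key_top: "?key x = (2 * j - 1, - int x)" "j \<noteq> 0" if "x \<in> {1..n}" "c x = (j, True)" for x j
    using key[OF that(1)] Pi_mem[OF c that(1)] that(2) by (auto simp: lazy_opts_def)
  have key_bottom: "?key x = (2 * j, int x)" if "x \<in> {1..n}" "c x = (j, False)" for x j
    using key[OF that(1)] that(2) by auto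
  show ?thesis
    unfolding shelf_deck_eq
  proof (rule sorted_wrt_concat_map_upt)
    fix j
    let ?top = "filter (\<lambda>i. c i = (j, True)) [1..<n+1]"
      and ?bottom = "filter (\<lambda>i. c i = (j, False)) [1..<n+1]"
    have "sorted_wrt (\<lambda>x y. ?key y < ?key x) ?top"
      by (rule sorted_wrt_mono_rel[OF _ sorted_wrt_filter[OF sorted_wrt_upt]])
        (auto simp: key_top)
    moreover have "sorted_wrt (\<lambda>x y. ?key x < ?key y) ?bottom"
      by (rule sorted_wrt_mono_rel[OF _ sorted_wrt_filter[OF sorted_wrt_upt]])
        (auto simp: key_bottom)
    moreover have "?key x < ?key y" if "x \<in> set ?top" "y \<in> set ?bottom" for x y
      using that key_top[of x j] key_bottom[of y j] by auto
    ultimately show "sorted_wrt (\<lambda>x y. ?key x < ?key y) (rev ?top @ ?bottom)"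
      by (simp add: sorted_wrt_append sorted_wrt_rev)
  next
    fix j j' x y
    assume "j < j'" and "x \<in> set (rev (filter (\<lambda>i. c i = (j, True)) [1..<n+1])
                                 @ filter (\<lambda>i. c i = (j, False)) [1..<n+1])"
      and "y \<in> set (rev (filter (\<lambda>i. c i = (j', True)) [1..<n+1])
                                 @ filter (\<lambda>i. c i = (j', False)) [1..<n+1])"
    then have "fst (?key x) \<le> 2 * j" "2 * j' - 1 \<le> fst (?key y)"
      using key by auto
    with \<open>j < j'\<close> have "fst (?key x) < fst (?key y)"
      by linarith
    then show "?key x < ?key y"
      by (simp add: less_prod_def)
  qed
qed

lemma set_shelf_deck:
  assumes c: "c \<in> {1..n} \<rightarrow> lazy_opts m"
  shows "set (shelf_deck n m c) = {1..n}"
proof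
  show "set (shelf_deck n m c) \<subseteq> {1..n}"
    by (auto simp: shelf_deck_eq)
  show "{1..n} \<subseteq> set (shelf_deck n m c)"
  proof
    fix x assume x: "x \<in> {1..n}"
    obtain j t where "c x = (j, t)" by fastforce
    moreover have "j \<le> m"
      using Pi_mem[OF c x] \<open>c x = (j, t)\<close> by (auto simp: lazy_opts_def)
    ultimately show "x \<in> set (shelf_deck n m c)"
      using x by (cases t) (auto simp: shelf_deck_eq intro!: bexI[of _ j])
  qed
qed

lemma shelf_deck_eq_perm_list_iff:
  assumes c: "c \<in> {1..n} \<rightarrow> lazy_opts m" and \<pi>: "\<pi> permutes {1..n}"
  shows "shelf_deck n m c = perm_list n \<pi> \<longleftrightarrow> is_pi_partition n \<pi> (choice_value \<circ> c)"
proof -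
  have inj: "inj_on \<pi> {1..n}"
    using permutes_inj_on[OF \<pi>] .
  show ?thesis
    unfolding is_pi_partition_iff_sorted[OF inj]
  proof
    assume "sorted_wrt (\<lambda>x y. card_key (choice_value \<circ> c) x < card_key (choice_value \<circ> c) y)
              (perm_list n \<pi>)"
    with shelf_deck_sorted[OF c] show "shelf_deck n m c = perm_list n \<pi>"
      by (rule sorted_wrt_key_unique)
        (simp_all only: set_shelf_deck[OF c] set_perm_list[OF \<pi>] inj_on_card_key)
  qed (use shelf_deck_sorted[OF c] in simp)
qed

lemma inj_on_choice_value: "inj_on choice_value (lazy_opts m)"
  by (auto simp: inj_on_def lazy_opts_def choice_value_def)

lemma card_shelf_outcomes:
  assumes Op: "Op \<subseteq> lazy_opts m" and \<pi>: "\<pi> permutes {1..n}"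
  shows "card {c \<in> {1..n} \<rightarrow>\<^sub>E Op. shelf_deck n m c = perm_list n \<pi>} =
         card {f \<in> {1..n} \<rightarrow>\<^sub>E choice_value ` Op. is_pi_partition n \<pi> f}"
proof -
  have "bij_betw choice_value Op (choice_value ` Op)"
    using inj_on_subset[OF inj_on_choice_value Op] by (simp add: bij_betw_def)
  from bij_betw_PiE_reindex[OF bij_betw_id this]
  have bij: "bij_betw (\<lambda>c. \<lambda>x\<in>{1..n}. choice_value (c x))
               ({1..n} \<rightarrow>\<^sub>E Op) ({1..n} \<rightarrow>\<^sub>E choice_value ` Op)"
    by simp
  have "shelf_deck n m c = perm_list n \<pi> \<longleftrightarrow>
          is_pi_partition n \<pi> (\<lambda>x\<in>{1..n}. choice_value (c x))" if "c \<in> {1..n} \<rightarrow>\<^sub>E Op" for c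
  proof -
    have "c \<in> {1..n} \<rightarrow> lazy_opts m"
      using that Op by auto
    then have "shelf_deck n m c = perm_list n \<pi> \<longleftrightarrow> is_pi_partition n \<pi> (choice_value \<circ> c)"
      by (rule shelf_deck_eq_perm_list_iff[OF _ \<pi>])
    also have "\<dots> \<longleftrightarrow> is_pi_partition n \<pi> (\<lambda>x\<in>{1..n}. choice_value (c x))"
      by (rule is_pi_partition_cong[OF \<pi>]) simp
    finally show ?thesis .
  qed
  then have "{c \<in> {1..n} \<rightarrow>\<^sub>E Op. shelf_deck n m c = perm_list n \<pi>} =
             {c \<in> {1..n} \<rightarrow>\<^sub>E Op. is_pi_partition n \<pi> (\<lambda>x\<in>{1..n}. choice_value (c x))}"
    by blast
  with card_filter_bij_betw[OF bij] show ?thesis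
    by simp
qed

lemma image_choice_value_std_opts: "choice_value ` std_opts m = {- int m..int m} - {0}"
proof (intro equalityI subsetI)
  fix v :: int assume v: "v \<in> {- int m..int m} - {0}"
  show "v \<in> choice_value ` std_opts m"
  proof (cases "v < 0")
    case True
    with v have "(nat (- v), True) \<in> std_opts m" "v = choice_value (nat (- v), True)"
      by (auto simp: std_opts_def choice_value_def)
    then show ?thesis by blast
  next
    case False
    with v have "(nat v, False) \<in> std_opts m" "v = choice_value (nat v, False)"
      by (auto simp: std_opts_def choice_value_def)
    then show ?thesis by blast
  qed
qed (auto simp: std_opts_def choice_value_def)

lemma lazy_opts_eq_insert_std_opts: "lazy_opts m = insert (0, False) (std_opts m)"
  by (auto simp: lazy_opts_def std_opts_def)

lemma image_choice_value_lazy_opts: "choice_value ` lazy_opts m = {- int m..int m}"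
proof -
  have "choice_value (0, False) = 0"
    by (simp add: choice_value_def)
  then show ?thesis
    by (auto simp: lazy_opts_eq_insert_std_opts image_choice_value_std_opts)
qed

lemma image_choice_value_strict_opts: "choice_value ` strict_opts m = {1..int m}"
proof (intro equalityI subsetI)
  fix v :: int assume "v \<in> {1..int m}"
  then have "(nat v, False) \<in> strict_opts m" "v = choice_value (nat v, False)"
    by (auto simp: strict_opts_def choice_value_def)
  then show "v \<in> choice_value ` strict_opts m" by blast
qed (auto simp: strict_opts_def choice_value_def)

lemma card_std_opts: "card (std_opts m) = 2 * m"
  by (simp add: std_opts_def card_cartesian_product)

lemma card_lazy_opts: "card (lazy_opts m) = 2 * m + 1"
proof -
  have "finite (std_opts m)" "(0, False) \<notin> std_opts m"
    by (simp_all add: std_opts_def)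
  then show ?thesis
    by (simp add: lazy_opts_eq_insert_std_opts card_std_opts)
qed

lemma card_strict_opts: "card (strict_opts m) = m"
  by (simp add: strict_opts_def card_cartesian_product)

lemma x_lazy_eq_Omega:
  assumes "\<pi> permutes {1..n}"
  shows "x_lazy n m \<pi> = real (Omega n \<pi> m) / real (2 * m + 1) ^ n"
  using card_shelf_outcomes[OF subset_refl assms]
  by (simp add: x_lazy_def shelf_prob_def Omega_def image_choice_value_lazy_opts card_lazy_opts)

lemma x_std_eq_Omega_star:
  assumes "\<pi> permutes {1..n}"
  shows "x_std n m \<pi> = real (Omega_star n \<pi> m) / real (2 * m) ^ n"
proof -
  have "std_opts m \<subseteq> lazy_opts m"
    by (auto simp: lazy_opts_eq_insert_std_opts)
  from card_shelf_outcomes[OF this assms] show ?thesis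
    by (simp add: x_std_def shelf_prob_def Omega_star_def image_choice_value_std_opts card_std_opts)
qed

lemma x_strict_eq_Omega_plus:
  assumes "\<pi> permutes {1..n}"
  shows "x_strict n m \<pi> = real (Omega_plus n \<pi> m) / real m ^ n"
proof -
  have "strict_opts m \<subseteq> lazy_opts m"
    by (auto simp: lazy_opts_def strict_opts_def)
  from card_shelf_outcomes[OF this assms] show ?thesis
    by (simp add: x_strict_def shelf_prob_def Omega_plus_def image_choice_value_strict_opts
        card_strict_opts)
qed

section \<open>Interleavings\<close>

lemma interleavings_Nil [simp]: "interleavings [] = {[]}"
  by (simp add: interleavings_def)

lemma interleavings_Cons [simp]: "interleavings (L # Ls) = (\<Union>ys\<in>interleavings Ls. shuffles L ys)"
  by (simp add: interleavings_def)

lemma finite_interleavings [simp]: "finite (interleavings Ls)"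
  by (induction Ls) auto

lemma interleavingsD:
  assumes "zs \<in> interleavings Ls" and "distinct (concat Ls)"
  shows "distinct zs \<and> set zs = set (concat Ls) \<and> (\<forall>L\<in>set Ls. filter (\<lambda>x. x \<in> set L) zs = L)"
  using assms
proof (induction Ls arbitrary: zs)
  case (Cons L Ls)
  then obtain ys where ys: "ys \<in> interleavings Ls" and zs: "zs \<in> shuffles L ys"
    by auto
  with Cons have dL: "distinct L" and IH: "distinct ys" "set ys = set (concat Ls)"
    "\<forall>L'\<in>set Ls. filter (\<lambda>x. x \<in> set L') ys = L'"
    by auto
  with Cons.prems have disj: "set L \<inter> set ys = {}"
    by auto
  have "filter (\<lambda>x. x \<in> set L') zs = L'" if "L' \<in> set Ls" for L'
  proof -
    have "filter (\<lambda>x. x \<in> set L') L = []"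
      using disj that IH(2) by (auto simp: filter_empty_conv)
    moreover have "filter (\<lambda>x. x \<in> set L') zs \<in>
                     shuffles (filter (\<lambda>x. x \<in> set L') L) (filter (\<lambda>x. x \<in> set L') ys)"
      using zs filter_shuffles by blast
    ultimately show ?thesis
      using IH(3) that by simp
  qed
  then show ?case
    using distinct_disjoint_shuffles[OF dL IH(1) disj zs] set_shuffles[OF zs] IH(2)
      filter_shuffles_disjoint1(1)[OF disj zs] by auto
qed simp

lemma interleavingsI:
  assumes "distinct zs" and "set zs = set (concat Ls)"
    and "\<forall>L\<in>set Ls. filter (\<lambda>x. x \<in> set L) zs = L" and "distinct (concat Ls)"
  shows "zs \<in> interleavings Ls"
  using assms
proof (induction Ls arbitrary: zs)
  case (Cons L Ls)
  define ys where "ys = filter (\<lambda>x. x \<notin> set L) zs"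
  have disj: "set L \<inter> set (concat Ls) = {}"
    using Cons.prems(4) by auto
  have "filter (\<lambda>x. x \<in> set L') ys = L'" if "L' \<in> set Ls" for L'
  proof -
    have "filter (\<lambda>x. x \<in> set L') ys = filter (\<lambda>x. x \<in> set L') zs"
      unfolding ys_def filter_filter using disj that by (intro filter_cong) auto
    then show ?thesis
      using Cons.prems(3) that by simp
  qed
  then have "ys \<in> interleavings Ls"
    using Cons.prems disj by (intro Cons.IH) (auto simp: ys_def)
  moreover have "zs \<in> shuffles L ys"
    using partition_in_shuffles[where P = "\<lambda>x. x \<in> set L" and xs = zs] Cons.prems(3)
    by (simp add: ys_def)
  ultimately show ?case
    by auto
qed simp

lemma shuffles_disjoint_right:
  assumes "set L \<inter> set ys = {}" and "set L \<inter> set ys' = {}" and "ys \<noteq> ys'"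
  shows "shuffles L ys \<inter> shuffles L ys' = {}"
  using filter_shuffles_disjoint1(2)[OF assms(1)] filter_shuffles_disjoint1(2)[OF assms(2)] assms(3)
  by blast

lemma card_interleavings_Cons:
  assumes "distinct (concat (L # Ls))"
  shows "card (interleavings (L # Ls)) =
           card (interleavings Ls) * (length L + length (concat Ls) choose length L)"
proof -
  have dLs: "distinct (concat Ls)" and disj: "set L \<inter> set (concat Ls) = {}"
    using assms by auto
  have set_ys: "set L \<inter> set ys = {}" and length_ys: "length ys = length (concat Ls)"
    if "ys \<in> interleavings Ls" for ys
  proof -
    have "distinct ys" and set_eq: "set ys = set (concat Ls)"
      using interleavingsD[OF that dLs] by auto
    then show "length ys = length (concat Ls)"
      by (metis distinct_card dLs)
    show "set L \<inter> set ys = {}"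
      using disj set_eq by simp
  qed
  have "card (interleavings (L # Ls)) = (\<Sum>ys\<in>interleavings Ls. card (shuffles L ys))"
    unfolding interleavings_Cons
  proof (rule card_UN_disjoint)
    show "\<forall>ys\<in>interleavings Ls. \<forall>ys'\<in>interleavings Ls. ys \<noteq> ys' \<longrightarrow>
            shuffles L ys \<inter> shuffles L ys' = {}"
      by (intro ballI impI shuffles_disjoint_right set_ys)
  qed auto
  also have "\<dots> = (\<Sum>ys\<in>interleavings Ls. length L + length (concat Ls) choose length L)"
  proof (rule sum.cong[OF refl])
    fix ys assume "ys \<in> interleavings Ls"
    from card_disjoint_shuffles[OF set_ys[OF this]] length_ys[OF this]
    show "card (shuffles L ys) = length L + length (concat Ls) choose length L"
      by simp
  qed
  also have "\<dots> = card (interleavings Ls) * (length L + length (concat Ls) choose length L)"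
    by simp
  finally show ?thesis .
qed

lemma card_interleavings:
  "distinct (concat Ls) \<Longrightarrow>
     card (interleavings Ls) * prod_list (map (\<lambda>L. fact (length L)) Ls) = fact (length (concat Ls))"
proof (induction Ls)
  case (Cons L Ls)
  let ?N = "length (concat Ls)" and ?C = "length L + length (concat Ls) choose length L"
  have "card (interleavings (L # Ls)) * prod_list (map (\<lambda>L. fact (length L)) (L # Ls)) =
          fact (length L) * ?C *
          (card (interleavings Ls) * prod_list (map (\<lambda>L. fact (length L)) Ls))"
    unfolding card_interleavings_Cons[OF Cons.prems] by (simp add: ac_simps)
  also have "\<dots> = fact (length L) * fact ?N * ?C"
    using Cons by (simp add: ac_simps)
  also have "\<dots> = fact (length L + ?N)"
    using binomial_fact_lemma[of "length L" "length L + ?N"] by simp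
  finally show ?case
    by simp
qed simp

lemma filter_perm_list_eq_iff:
  assumes \<pi>: "\<pi> permutes {1..n}" and "distinct L" and "set L \<subseteq> {1..n}"
  shows "filter (\<lambda>x. x \<in> set L) (perm_list n \<pi>) = L \<longleftrightarrow> sorted_wrt (\<lambda>x y. inv \<pi> x < inv \<pi> y) L"
proof
  have sorted: "sorted_wrt (\<lambda>x y. inv \<pi> x < inv \<pi> y) (filter (\<lambda>x. x \<in> set L) (perm_list n \<pi>))"
    using sorted_wrt_filter[OF sorted_wrt_inv_perm_list[OF \<pi>]] .
  then show "sorted_wrt (\<lambda>x y. inv \<pi> x < inv \<pi> y) L"
    if "filter (\<lambda>x. x \<in> set L) (perm_list n \<pi>) = L"
    using that by simp
  show "filter (\<lambda>x. x \<in> set L) (perm_list n \<pi>) = L"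
    if "sorted_wrt (\<lambda>x y. inv \<pi> x < inv \<pi> y) L"
  proof (rule sorted_wrt_key_unique[OF sorted that])
    show "set (filter (\<lambda>x. x \<in> set L) (perm_list n \<pi>)) = set L"
      using assms(3) set_perm_list[OF \<pi>] by auto
    show "inj_on (inv \<pi>) (set (filter (\<lambda>x. x \<in> set L) (perm_list n \<pi>)))"
      using permutes_inj[OF permutes_inv[OF \<pi>]] by (rule inj_on_subset) simp
  qed
qed

lemma perm_list_in_interleavings_iff:
  assumes \<pi>: "\<pi> permutes {1..n}" and dist: "distinct (concat Ls)" and "set (concat Ls) = {1..n}"
  shows "perm_list n \<pi> \<in> interleavings Ls \<longleftrightarrow> (\<forall>L\<in>set Ls. sorted_wrt (\<lambda>x y. inv \<pi> x < inv \<pi> y) L)"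
proof -
  have "perm_list n \<pi> \<in> interleavings Ls \<longleftrightarrow>
          (\<forall>L\<in>set Ls. filter (\<lambda>x. x \<in> set L) (perm_list n \<pi>) = L)"
  proof
    assume "perm_list n \<pi> \<in> interleavings Ls"
    then show "\<forall>L\<in>set Ls. filter (\<lambda>x. x \<in> set L) (perm_list n \<pi>) = L"
      using interleavingsD[OF _ dist] by blast
  next
    assume "\<forall>L\<in>set Ls. filter (\<lambda>x. x \<in> set L) (perm_list n \<pi>) = L"
    with distinct_perm_list[OF \<pi>] set_perm_list[OF \<pi>] assms(3) dist
    show "perm_list n \<pi> \<in> interleavings Ls"
      by (intro interleavingsI) simp_all
  qed
  also have "\<dots> \<longleftrightarrow> (\<forall>L\<in>set Ls. sorted_wrt (\<lambda>x y. inv \<pi> x < inv \<pi> y) L)"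
  proof (rule ball_cong[OF refl])
    fix L assume L: "L \<in> set Ls"
    have "distinct L"
      using dist L by (simp add: distinct_concat_iff)
    moreover have "set L \<subseteq> {1..n}"
      using assms(3) L by auto
    ultimately show "filter (\<lambda>x. x \<in> set L) (perm_list n \<pi>) = L \<longleftrightarrow>
                       sorted_wrt (\<lambda>x y. inv \<pi> x < inv \<pi> y) L"
      by (rule filter_perm_list_eq_iff[OF \<pi>])
  qed
  finally show ?thesis .
qed

definition pile_offset :: "nat list \<Rightarrow> nat \<Rightarrow> nat" where
  "pile_offset A i = sum_list (take i A)"

lemma pile_offset_0 [simp]: "pile_offset A 0 = 0"
  by (simp add: pile_offset_def)

lemma pile_offset_Suc: "i < length A \<Longrightarrow> pile_offset A (Suc i) = pile_offset A i + A ! i"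
  by (simp add: pile_offset_def take_Suc_conv_app_nth)

lemma pile_offset_length: "pile_offset A (length A) = sum_list A"
  by (simp add: pile_offset_def)

lemma pile_offset_mono: "i \<le> j \<Longrightarrow> pile_offset A i \<le> pile_offset A j"
  by (metis pile_offset_def le_Suc_ex le_add1 sum_list_append take_add)

lemma pile_offset_le_sum_list: "pile_offset A i \<le> sum_list A"
  by (metis pile_offset_def append_take_drop_id le_add1 sum_list_append)

lemma pile_eq:
  "i < length A \<Longrightarrow> pile rv A i =
     (if rv i then rev [pile_offset A i + 1..<pile_offset A (Suc i) + 1]
      else [pile_offset A i + 1..<pile_offset A (Suc i) + 1])"
  by (simp add: pile_def Let_def pile_offset_Suc pile_offset_def[symmetric])

lemma set_pile: "i < length A \<Longrightarrow> set (pile rv A i) = {pile_offset A i + 1..pile_offset A (Suc i)}"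
  by (auto simp: pile_eq)

lemma distinct_pile: "i < length A \<Longrightarrow> distinct (pile rv A i)"
  by (simp add: pile_eq)

lemma length_pile: "i < length A \<Longrightarrow> length (pile rv A i) = A ! i"
  by (simp add: pile_eq pile_offset_Suc)

lemma concat_piles_prefix:
  "k \<le> length A \<Longrightarrow>
     set (concat (map (pile rv A) [0..<k])) = {1..pile_offset A k} \<and>
     distinct (concat (map (pile rv A) [0..<k]))"
proof (induction k)
  case (Suc k)
  then have k: "k < length A"
    by simp
  have "{1..pile_offset A k} \<union> {pile_offset A k + 1..pile_offset A (Suc k)} =
          {1..pile_offset A (Suc k)}"
    using pile_offset_mono[of k "Suc k" A] by auto
  then show ?case
    using Suc.IH k set_pile[OF k, of rv] distinct_pile[OF k, of rv] by (auto simp: upt_Suc_append)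
qed simp

lemma concat_piles:
  assumes "A \<in> weak_comps n r"
  shows "set (concat (piles rv A)) = {1..n}" and "distinct (concat (piles rv A))"
    and "length (concat (piles rv A)) = n"
proof -
  have "sum_list A = n"
    using assms by (simp add: weak_comps_def)
  then show set_eq: "set (concat (piles rv A)) = {1..n}" and dist: "distinct (concat (piles rv A))"
    using concat_piles_prefix[of "length A" A rv] by (auto simp: piles_def pile_offset_length)
  show "length (concat (piles rv A)) = n"
    by (metis dist set_eq distinct_card card_atLeastAtMost diff_Suc_1)
qed

lemma card_interleavings_piles:
  assumes "A \<in> weak_comps n r"
  shows "card (interleavings (piles rv A)) = multinom n A"
proof -
  have lengths: "map (\<lambda>L. fact (length L)) (piles rv A) = map fact A"
    by (rule nth_equalityI) (auto simp: piles_def length_pile)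
  have "card (interleavings (piles rv A)) * prod_list (map fact A) = fact n"
    using card_interleavings[OF concat_piles(2)[OF assms, where rv = rv]]
    unfolding lengths concat_piles(3)[OF assms] .
  moreover have "prod_list (map fact A) \<noteq> (0 :: nat)"
    by (induction A) auto
  ultimately show ?thesis
    unfolding multinom_def by (metis nonzero_mult_div_cancel_right)
qed

lemma finite_weak_comps: "finite (weak_comps n r)"
proof -
  have "weak_comps n r \<subseteq> {xs. set xs \<subseteq> {0..n} \<and> length xs = r}"
    by (auto simp: weak_comps_def dest: member_le_sum_list)
  moreover have "finite {xs. set xs \<subseteq> {0..n} \<and> length xs = r}"
    by (rule finite_lists_length_eq) simp
  ultimately show ?thesis
    by (rule finite_subset)
qed

lemma riffle_prob_eq_card_cuts:
  "riffle_prob r rv n \<pi> =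
     real (card {A \<in> weak_comps n r. perm_list n \<pi> \<in> interleavings (piles rv A)}) / real r ^ n"
proof -
  let ?hit = "\<lambda>A. perm_list n \<pi> \<in> interleavings (piles rv A)"
  have "riffle_prob r rv n \<pi> = (\<Sum>A\<in>weak_comps n r. if ?hit A then 1 / real r ^ n else 0)"
    unfolding riffle_prob_def
  proof (rule sum.cong[OF refl])
    fix A assume A: "A \<in> weak_comps n r"
    show "real (multinom n A) / real r ^ n *
            ((if ?hit A then 1 else 0) / real (card (interleavings (piles rv A)))) =
          (if ?hit A then 1 / real r ^ n else 0)"
    proof (cases "?hit A")
      case True
      then have "card (interleavings (piles rv A)) \<noteq> 0"
        by (auto simp: card_eq_0_iff)
      with True show ?thesis
        by (simp add: card_interleavings_piles[OF A])
    qed simp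
  qed
  also have "\<dots> = (\<Sum>A\<in>{A \<in> weak_comps n r. ?hit A}. 1 / real r ^ n)"
    by (rule sum.inter_filter[symmetric, OF finite_weak_comps])
  also have "\<dots> = real (card {A \<in> weak_comps n r. ?hit A}) / real r ^ n"
    by simp
  finally show ?thesis .
qed

definition pile_index :: "nat list \<Rightarrow> nat \<Rightarrow> nat" where
  "pile_index A k = card {i \<in> {1..<length A}. pile_offset A i < k}"

lemma pile_index_eqI:
  assumes "i < length A" and "pile_offset A i < k" and "k \<le> pile_offset A (Suc i)"
  shows "pile_index A k = i"
proof -
  have "pile_offset A j < k \<longleftrightarrow> j \<le> i" for j
  proof
    assume "pile_offset A j < k"
    moreover have "pile_offset A (Suc i) \<le> pile_offset A j" if "\<not> j \<le> i"
      using that by (intro pile_offset_mono) simp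
    ultimately show "j \<le> i"
      using assms(3) by linarith
  next
    assume "j \<le> i"
    then show "pile_offset A j < k"
      using pile_offset_mono[of j i A] assms(2) by linarith
  qed
  then have "{j \<in> {1..<length A}. pile_offset A j < k} = {j \<in> {1..<length A}. j \<le> i}"
    by simp
  also have "\<dots> = {1..i}"
    using assms(1) by auto
  finally show ?thesis
    by (simp add: pile_index_def)
qed

lemma pile_index_bounds:
  assumes A: "A \<in> weak_comps n r" and k: "k \<in> {1..n}"
  shows "pile_index A k < r" and "pile_offset A (pile_index A k) < k"
    and "k \<le> pile_offset A (Suc (pile_index A k))"
proof -
  have len: "length A = r" and "pile_offset A r = n"
    using A by (auto simp: weak_comps_def pile_offset_length[symmetric])
  with k have kr: "k \<le> pile_offset A r"
    by simp
  define j where "j = (LEAST j. k \<le> pile_offset A j)"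
  have kj: "k \<le> pile_offset A j" and "j \<le> r"
    unfolding j_def by (rule LeastI[where P = "\<lambda>j. k \<le> pile_offset A j", OF kr],
        rule Least_le[where P = "\<lambda>j. k \<le> pile_offset A j", OF kr])
  moreover have "j \<noteq> 0"
    using kj k by (intro notI) simp
  then obtain i where i: "j = Suc i"
    using not0_implies_Suc by blast
  moreover have "\<not> k \<le> pile_offset A i"
    using not_less_Least[of i "\<lambda>j. k \<le> pile_offset A j"] i unfolding j_def by simp
  ultimately have "i < length A" "pile_offset A i < k" "k \<le> pile_offset A (Suc i)"
    using len by simp_all
  moreover from this have "pile_index A k = i"
    by (rule pile_index_eqI)
  ultimately show "pile_index A k < r" "pile_offset A (pile_index A k) < k"
    "k \<le> pile_offset A (Suc (pile_index A k))"
    using len by simp_all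
qed

lemma pile_index_eq_iff:
  assumes "A \<in> weak_comps n r" and "k \<in> {1..n}" and "i < r"
  shows "pile_index A k = i \<longleftrightarrow> pile_offset A i < k \<and> k \<le> pile_offset A (Suc i)"
proof
  show "pile_offset A i < k \<and> k \<le> pile_offset A (Suc i)" if "pile_index A k = i"
    using pile_index_bounds[OF assms(1,2)] that by simp
  show "pile_index A k = i" if "pile_offset A i < k \<and> k \<le> pile_offset A (Suc i)"
    using pile_index_eqI[of i A k] that assms(1,3) by (simp add: weak_comps_def)
qed

lemma pile_index_mono: "a \<le> b \<Longrightarrow> pile_index A a \<le> pile_index A b"
  unfolding pile_index_def by (rule card_mono) auto

definition mono_labellings :: "nat \<Rightarrow> nat \<Rightarrow> (nat \<Rightarrow> nat) set" where
  "mono_labellings n r =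
     {p \<in> {1..n} \<rightarrow>\<^sub>E {0..<r}. \<forall>a\<in>{1..n}. \<forall>b\<in>{1..n}. a \<le> b \<longrightarrow> p a \<le> p b}"

definition labelling_comp :: "nat \<Rightarrow> nat \<Rightarrow> (nat \<Rightarrow> nat) \<Rightarrow> nat list" where
  "labelling_comp n r p = map (\<lambda>i. card {k \<in> {1..n}. p k = i}) [0..<r]"

lemma pile_offset_labelling_comp:
  "i \<le> r \<Longrightarrow> pile_offset (labelling_comp n r p) i = card {k \<in> {1..n}. p k < i}"
proof (induction i)
  case (Suc i)
  have "pile_offset (labelling_comp n r p) (Suc i) =
          card {k \<in> {1..n}. p k < i} + card {k \<in> {1..n}. p k = i}"
    using Suc by (simp add: pile_offset_Suc labelling_comp_def)
  also have "\<dots> = card ({k \<in> {1..n}. p k < i} \<union> {k \<in> {1..n}. p k = i})"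
    by (rule card_Un_disjoint[symmetric]) auto
  also have "{k \<in> {1..n}. p k < i} \<union> {k \<in> {1..n}. p k = i} = {k \<in> {1..n}. p k < Suc i}"
    by auto
  finally show ?case .
qed simp

lemma labelling_comp_in_weak_comps:
  assumes "p \<in> {1..n} \<rightarrow>\<^sub>E {0..<r}"
  shows "labelling_comp n r p \<in> weak_comps n r"
proof -
  have "length (labelling_comp n r p) = r"
    by (simp add: labelling_comp_def)
  then have "sum_list (labelling_comp n r p) = pile_offset (labelling_comp n r p) r"
    using pile_offset_length[of "labelling_comp n r p"] by simp
  also have "\<dots> = card {k \<in> {1..n}. p k < r}"
    by (rule pile_offset_labelling_comp) simp
  also have "{k \<in> {1..n}. p k < r} = {1..n}"
    using assms by auto
  finally show ?thesis
    by (simp add: weak_comps_def labelling_comp_def)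
qed

lemma labelling_comp_pile_index:
  assumes A: "A \<in> weak_comps n r"
  shows "labelling_comp n r (\<lambda>k\<in>{1..n}. pile_index A k) = A"
proof (rule nth_equalityI)
  have len: "length A = r" and sum: "sum_list A = n"
    using A by (auto simp: weak_comps_def)
  then show "length (labelling_comp n r (\<lambda>k\<in>{1..n}. pile_index A k)) = length A"
    by (simp add: labelling_comp_def)
  fix i assume "i < length (labelling_comp n r (\<lambda>k\<in>{1..n}. pile_index A k))"
  then have i: "i < r"
    by (simp add: labelling_comp_def)
  have "pile_offset A (Suc i) \<le> n"
    using pile_offset_le_sum_list[of A "Suc i"] sum by simp
  then have "{k \<in> {1..n}. (\<lambda>k\<in>{1..n}. pile_index A k) k = i} =
               {pile_offset A i<..pile_offset A (Suc i)}"
    using pile_index_eq_iff[OF A _ i] by auto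
  then show "labelling_comp n r (\<lambda>k\<in>{1..n}. pile_index A k) ! i = A ! i"
    using i len by (simp add: labelling_comp_def pile_offset_Suc)
qed

lemma pile_index_labelling_comp:
  assumes p: "p \<in> mono_labellings n r" and k: "k \<in> {1..n}"
  shows "pile_index (labelling_comp n r p) k = p k"
proof -
  have pk: "p k < r" and mono: "\<And>a b. a \<in> {1..n} \<Longrightarrow> b \<in> {1..n} \<Longrightarrow> a \<le> b \<Longrightarrow> p a \<le> p b"
    using p k by (auto simp: mono_labellings_def)
  have A: "labelling_comp n r p \<in> weak_comps n r"
    using p by (simp add: mono_labellings_def labelling_comp_in_weak_comps)
  have "{k' \<in> {1..n}. p k' < p k} \<subseteq> {1..<k}"
  proof
    fix x assume "x \<in> {k' \<in> {1..n}. p k' < p k}"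
    with mono[of k x] k show "x \<in> {1..<k}"
      by (cases "k \<le> x") auto
  qed
  then have "card {k' \<in> {1..n}. p k' < p k} \<le> card {1..<k}"
    by (intro card_mono) auto
  with k have below: "card {k' \<in> {1..n}. p k' < p k} < k"
    by simp linarith
  have "{1..k} \<subseteq> {k' \<in> {1..n}. p k' < Suc (p k)}"
    using mono k by (auto simp: less_Suc_eq_le)
  then have "card {1..k} \<le> card {k' \<in> {1..n}. p k' < Suc (p k)}"
    by (intro card_mono) auto
  then have above: "k \<le> card {k' \<in> {1..n}. p k' < Suc (p k)}"
    by simp
  show ?thesis
    using pile_index_eq_iff[OF A k pk] pk below above by (simp add: pile_offset_labelling_comp)
qed

lemma bij_betw_pile_index:
  "bij_betw (\<lambda>A. \<lambda>k\<in>{1..n}. pile_index A k) (weak_comps n r) (mono_labellings n r)"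
proof (rule bij_betw_byWitness[where f' = "labelling_comp n r"])
  show "\<forall>A\<in>weak_comps n r. labelling_comp n r (\<lambda>k\<in>{1..n}. pile_index A k) = A"
    using labelling_comp_pile_index by blast
  show "\<forall>p\<in>mono_labellings n r. (\<lambda>k\<in>{1..n}. pile_index (labelling_comp n r p) k) = p"
  proof
    fix p assume p: "p \<in> mono_labellings n r"
    have "(\<lambda>k\<in>{1..n}. pile_index (labelling_comp n r p) k) = (\<lambda>k\<in>{1..n}. p k)"
      by (rule restrict_cong) (simp_all add: pile_index_labelling_comp[OF p])
    also have "\<dots> = p"
      using p by (auto simp: mono_labellings_def)
    finally show "(\<lambda>k\<in>{1..n}. pile_index (labelling_comp n r p) k) = p" .
  qed
  show "(\<lambda>A. \<lambda>k\<in>{1..n}. pile_index A k) ` weak_comps n r \<subseteq> mono_labellings n r"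
    using pile_index_bounds(1) pile_index_mono by (auto simp: mono_labellings_def)
  show "labelling_comp n r ` mono_labellings n r \<subseteq> weak_comps n r"
    using labelling_comp_in_weak_comps by (auto simp: mono_labellings_def)
qed

section \<open>Riffle shuffles\<close>

definition pile_order :: "(nat \<Rightarrow> nat) \<Rightarrow> bool \<Rightarrow> nat \<Rightarrow> nat \<Rightarrow> bool" where
  "pile_order \<sigma> reversed = (if reversed then (\<lambda>x y. \<sigma> y < \<sigma> x) else (\<lambda>x y. \<sigma> x < \<sigma> y))"

lemma sorted_wrt_pile_iff:
  assumes "i < length A"
  shows "sorted_wrt (\<lambda>x y. \<sigma> x < \<sigma> y) (pile rv A i) \<longleftrightarrow>
           (\<forall>k. pile_offset A i < k \<and> k < pile_offset A (Suc i) \<longrightarrow> pile_order \<sigma> (rv i) k (Suc k))"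
proof -
  have "sorted_wrt (\<lambda>x y. \<sigma> x < \<sigma> y) (pile rv A i) \<longleftrightarrow>
          sorted_wrt (pile_order \<sigma> (rv i))
            (map (\<lambda>x. x) [pile_offset A i + 1..<pile_offset A (Suc i) + 1])"
    using assms by (simp add: pile_eq pile_order_def sorted_wrt_rev)
  also have "\<dots> \<longleftrightarrow> (\<forall>k. pile_offset A i < k \<and> k < pile_offset A (Suc i) \<longrightarrow>
                            pile_order \<sigma> (rv i) k (Suc k))"
    by (subst sorted_wrt_map_upt_iff_adjacent) (auto simp: transp_def pile_order_def)
  finally show ?thesis .
qed

text \<open>Here \<open>p k\<close> is the pile of card \<open>k\<close> and \<open>\<sigma> k\<close> its position in the shuffled deck: the
  piles are consecutive blocks of the cut, and each keeps its order in the shuffled deck, or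
  reverses it if \<open>rv\<close> marks it as reversed.\<close>
definition riffle_labelling :: "(nat \<Rightarrow> bool) \<Rightarrow> (nat \<Rightarrow> nat) \<Rightarrow> nat \<Rightarrow> (nat \<Rightarrow> nat) \<Rightarrow> bool" where
  "riffle_labelling rv \<sigma> n p \<longleftrightarrow>
     (\<forall>k. 1 \<le> k \<and> k < n \<longrightarrow>
        p k \<le> p (Suc k) \<and> (p k = p (Suc k) \<longrightarrow> pile_order \<sigma> (rv (p k)) k (Suc k)))"

lemma riffle_labelling_pile_index_iff:
  assumes A: "A \<in> weak_comps n r"
  shows "riffle_labelling rv \<sigma> n (\<lambda>k\<in>{1..n}. pile_index A k) \<longleftrightarrow>
           (\<forall>i<r. \<forall>k. pile_offset A i < k \<and> k < pile_offset A (Suc i) \<longrightarrow>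
                      pile_order \<sigma> (rv i) k (Suc k))"
proof
  assume labelling: "riffle_labelling rv \<sigma> n (\<lambda>k\<in>{1..n}. pile_index A k)"
  show "\<forall>i<r. \<forall>k. pile_offset A i < k \<and> k < pile_offset A (Suc i) \<longrightarrow> pile_order \<sigma> (rv i) k (Suc k)"
  proof (intro allI impI)
    fix i k assume i: "i < r" and k: "pile_offset A i < k \<and> k < pile_offset A (Suc i)"
    moreover have "pile_offset A (Suc i) \<le> n"
      using A pile_offset_le_sum_list[of A "Suc i"] by (simp add: weak_comps_def)
    ultimately have "1 \<le> k" "k < n" "pile_index A k = i" "pile_index A (Suc k) = i"
      using pile_index_eq_iff[OF A _ i, of k] pile_index_eq_iff[OF A _ i, of "Suc k"] by auto
    then show "pile_order \<sigma> (rv i) k (Suc k)"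
      using labelling[unfolded riffle_labelling_def, rule_format, of k] by simp
  qed
next
  assume adjacent: "\<forall>i<r. \<forall>k. pile_offset A i < k \<and> k < pile_offset A (Suc i) \<longrightarrow>
                                 pile_order \<sigma> (rv i) k (Suc k)"
  show "riffle_labelling rv \<sigma> n (\<lambda>k\<in>{1..n}. pile_index A k)"
    unfolding riffle_labelling_def
  proof (intro allI impI conjI)
    fix k assume k: "1 \<le> k \<and> k < n"
    then show "(\<lambda>k\<in>{1..n}. pile_index A k) k \<le> (\<lambda>k\<in>{1..n}. pile_index A k) (Suc k)"
      using pile_index_mono[of k "Suc k" A] by simp
    let ?i = "pile_index A k"
    assume "(\<lambda>k\<in>{1..n}. pile_index A k) k = (\<lambda>k\<in>{1..n}. pile_index A k) (Suc k)"
    with k have "pile_index A (Suc k) = ?i"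
      by simp
    moreover have "?i < r" "pile_offset A ?i < k"
      using pile_index_bounds[OF A, of k] k by simp_all
    ultimately have "pile_offset A ?i < k \<and> k < pile_offset A (Suc ?i)"
      using pile_index_eq_iff[OF A _ \<open>?i < r\<close>, of "Suc k"] k by simp
    with adjacent \<open>?i < r\<close> have "pile_order \<sigma> (rv ?i) k (Suc k)"
      by blast
    with k show "pile_order \<sigma> (rv ((\<lambda>k\<in>{1..n}. pile_index A k) k)) k (Suc k)"
      by simp
  qed
qed

lemma perm_list_in_interleavings_piles_iff:
  assumes A: "A \<in> weak_comps n r" and \<pi>: "\<pi> permutes {1..n}"
  shows "perm_list n \<pi> \<in> interleavings (piles rv A) \<longleftrightarrow>
           riffle_labelling rv (inv \<pi>) n (\<lambda>k\<in>{1..n}. pile_index A k)"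
proof -
  have len: "length A = r"
    using A by (simp add: weak_comps_def)
  have "perm_list n \<pi> \<in> interleavings (piles rv A) \<longleftrightarrow>
          (\<forall>L\<in>set (piles rv A). sorted_wrt (\<lambda>x y. inv \<pi> x < inv \<pi> y) L)"
    by (rule perm_list_in_interleavings_iff[OF \<pi> concat_piles(2,1)[where rv = rv, OF A]])
  also have "\<dots> \<longleftrightarrow> (\<forall>i<r. sorted_wrt (\<lambda>x y. inv \<pi> x < inv \<pi> y) (pile rv A i))"
    by (auto simp: piles_def len)
  also have "\<dots> \<longleftrightarrow> (\<forall>i<r. \<forall>k. pile_offset A i < k \<and> k < pile_offset A (Suc i) \<longrightarrow>
                                  pile_order (inv \<pi>) (rv i) k (Suc k))"
    using sorted_wrt_pile_iff len by simp
  also have "\<dots> \<longleftrightarrow> riffle_labelling rv (inv \<pi>) n (\<lambda>k\<in>{1..n}. pile_index A k)"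
    by (rule riffle_labelling_pile_index_iff[OF A, symmetric])
  finally show ?thesis .
qed

lemma riffle_labelling_mono:
  assumes "riffle_labelling rv \<sigma> n p" and "a \<in> {1..n}" and "b \<in> {1..n}" and "a \<le> b"
  shows "p a \<le> p b"
proof -
  have "b \<le> n \<Longrightarrow> p a \<le> p b"
    using assms(4)
  proof (induction b rule: dec_induct)
    case (step b)
    have "p b \<le> p (Suc b)"
      using assms(1)[unfolded riffle_labelling_def, rule_format, of b] assms(2) step by simp
    with step show ?case
      by simp
  qed simp
  with assms(3) show ?thesis
    by simp
qed

lemma card_riffle_cuts:
  assumes \<pi>: "\<pi> permutes {1..n}"
  shows "card {A \<in> weak_comps n r. perm_list n \<pi> \<in> interleavings (piles rv A)} =
         card {p \<in> {1..n} \<rightarrow>\<^sub>E {0..<r}. riffle_labelling rv (inv \<pi>) n p}"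
proof -
  have "{A \<in> weak_comps n r. perm_list n \<pi> \<in> interleavings (piles rv A)} =
        {A \<in> weak_comps n r. riffle_labelling rv (inv \<pi>) n (\<lambda>k\<in>{1..n}. pile_index A k)}"
    by (simp add: perm_list_in_interleavings_piles_iff[OF _ \<pi>] cong: conj_cong)
  also have "card \<dots> = card {p \<in> mono_labellings n r. riffle_labelling rv (inv \<pi>) n p}"
    by (rule card_filter_bij_betw[OF bij_betw_pile_index])
  also have "{p \<in> mono_labellings n r. riffle_labelling rv (inv \<pi>) n p} =
             {p \<in> {1..n} \<rightarrow>\<^sub>E {0..<r}. riffle_labelling rv (inv \<pi>) n p}"
    unfolding mono_labellings_def by (blast intro: riffle_labelling_mono)
  finally show ?thesis .
qed

lemma riffle_labelling_iff_is_pi_partition: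
  assumes \<pi>: "\<pi> permutes {1..n}" and p: "p \<in> {1..n} \<rightarrow>\<^sub>E {0..<r}"
    and val_less: "\<And>a b. a < r \<Longrightarrow> b < r \<Longrightarrow> zless (val a) (val b) \<longleftrightarrow> a < b"
    and val_neg: "\<And>a. a < r \<Longrightarrow> val a < 0 \<longleftrightarrow> rv a"
  shows "riffle_labelling rv (inv \<pi>) n p \<longleftrightarrow> is_pi_partition n (inv \<pi>) (\<lambda>x\<in>{1..n}. val (p (\<pi> x)))"
proof -
  let ?f = "\<lambda>x. val (p (\<pi> x))"
  have adjacent:
    "(p k \<le> p (Suc k) \<and> (p k = p (Suc k) \<longrightarrow> pile_order (inv \<pi>) (rv (p k)) k (Suc k))) \<longleftrightarrow>
     (inv \<pi> k < inv \<pi> (k + 1) \<longrightarrow> prec_plus (?f (inv \<pi> k)) (?f (inv \<pi> (k + 1)))) \<and>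
     (inv \<pi> (k + 1) < inv \<pi> k \<longrightarrow> prec_minus (?f (inv \<pi> k)) (?f (inv \<pi> (k + 1))))"
    if "1 \<le> k \<and> k < n" for k
  proof -
    have pk: "p k < r" "p (Suc k) < r"
      using PiE_mem[OF p, of k] PiE_mem[OF p, of "Suc k"] that by simp_all
    then have plus: "prec_plus (val (p k)) (val (p (Suc k))) \<longleftrightarrow>
                       p k < p (Suc k) \<or> (p k = p (Suc k) \<and> \<not> rv (p k))"
      and minus: "prec_minus (val (p k)) (val (p (Suc k))) \<longleftrightarrow>
                    p k < p (Suc k) \<or> (p k = p (Suc k) \<and> rv (p k))"
      using prec_val_iff[OF val_less pk] val_neg[OF pk(1)] by simp_all
    have "inv \<pi> k \<noteq> inv \<pi> (Suc k)"
      using permutes_inverses(1)[OF \<pi>, of k] permutes_inverses(1)[OF \<pi>, of "Suc k"] by auto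
    then show ?thesis
      unfolding permutes_inverses(1)[OF \<pi>] Suc_eq_plus1[symmetric] plus minus pile_order_def
      by (cases "inv \<pi> k < inv \<pi> (Suc k)"; cases "rv (p k)") (auto simp: le_less)
  qed
  have "is_pi_partition n (inv \<pi>) (\<lambda>x\<in>{1..n}. ?f x) \<longleftrightarrow> is_pi_partition n (inv \<pi>) ?f"
    by (rule is_pi_partition_cong[OF permutes_inv[OF \<pi>]]) simp
  also have "\<dots> \<longleftrightarrow> riffle_labelling rv (inv \<pi>) n p"
    unfolding riffle_labelling_def is_pi_partition_def
    by (rule iff_allI, rule imp_cong[OF refl], erule adjacent[symmetric])
  finally show ?thesis ..
qed

lemma riffle_prob_eq_pi_partitions:
  assumes \<pi>: "\<pi> permutes {1..n}"
    and val_less: "\<And>a b. a < r \<Longrightarrow> b < r \<Longrightarrow> zless (val a) (val b) \<longleftrightarrow> a < b"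
    and val_neg: "\<And>a. a < r \<Longrightarrow> val a < 0 \<longleftrightarrow> rv a"
  shows "riffle_prob r rv n \<pi> =
           real (card {f \<in> {1..n} \<rightarrow>\<^sub>E val ` {0..<r}. is_pi_partition n (inv \<pi>) f}) / real r ^ n"
proof -
  have "bij_betw val {0..<r} (val ` {0..<r})"
    using inj_on_of_zless_iff[OF val_less] by (simp add: bij_betw_def)
  from bij_betw_PiE_reindex[OF permutes_imp_bij[OF \<pi>] this]
  have bij: "bij_betw (\<lambda>p. \<lambda>x\<in>{1..n}. val (p (\<pi> x)))
               ({1..n} \<rightarrow>\<^sub>E {0..<r}) ({1..n} \<rightarrow>\<^sub>E val ` {0..<r})" .
  have "{p \<in> {1..n} \<rightarrow>\<^sub>E {0..<r}. riffle_labelling rv (inv \<pi>) n p} =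
        {p \<in> {1..n} \<rightarrow>\<^sub>E {0..<r}. is_pi_partition n (inv \<pi>) (\<lambda>x\<in>{1..n}. val (p (\<pi> x)))}"
    using riffle_labelling_iff_is_pi_partition[OF \<pi> _ val_less val_neg] by blast
  then show ?thesis
    using riffle_prob_eq_card_cuts card_riffle_cuts[OF \<pi>] card_filter_bij_betw[OF bij] by simp
qed

lemma y_lazy_eq_x_lazy_inv:
  assumes \<pi>: "\<pi> permutes {1..n}"
  shows "y_lazy n m \<pi> = x_lazy n m (inv \<pi>)"
proof -
  have "y_lazy n m \<pi> = real (card {f \<in> {1..n} \<rightarrow>\<^sub>E zunrank ` {0..<2 * m + 1}.
                                     is_pi_partition n (inv \<pi>) f}) / real (2 * m + 1) ^ n"
    unfolding y_lazy_def
    by (rule riffle_prob_eq_pi_partitions[OF \<pi>]) (simp_all add: zless_def zunrank_less_0_iff)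
  then show ?thesis
    by (simp only: image_zunrank_lazy x_lazy_eq_Omega[OF permutes_inv[OF \<pi>]] Omega_def)
qed

lemma y_star_eq_x_std_inv:
  assumes \<pi>: "\<pi> permutes {1..n}"
  shows "y_star n m \<pi> = x_std n m (inv \<pi>)"
proof -
  have "y_star n m \<pi> = real (card {f \<in> {1..n} \<rightarrow>\<^sub>E (\<lambda>i. zunrank (Suc i)) ` {0..<2 * m}.
                                     is_pi_partition n (inv \<pi>) f}) / real (2 * m) ^ n"
    unfolding y_star_def
    by (rule riffle_prob_eq_pi_partitions[OF \<pi>]) (simp_all add: zless_def zunrank_less_0_iff)
  then show ?thesis
    by (simp only: image_zunrank_Suc_std x_std_eq_Omega_star[OF permutes_inv[OF \<pi>]] Omega_star_def)
qed

lemma y_plus_eq_x_strict_inv: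
  assumes \<pi>: "\<pi> permutes {1..n}"
  shows "y_plus n m \<pi> = x_strict n m (inv \<pi>)"
proof -
  have "y_plus n m \<pi> = real (card {f \<in> {1..n} \<rightarrow>\<^sub>E (\<lambda>i. int i + 1) ` {0..<m}.
                                     is_pi_partition n (inv \<pi>) f}) / real m ^ n"
    unfolding y_plus_def
    by (rule riffle_prob_eq_pi_partitions[OF \<pi>]) (auto simp: zless_def zrank_def)
  then show ?thesis
    by (simp only: image_of_nat_plus_1_strict x_strict_eq_Omega_plus[OF permutes_inv[OF \<pi>]]
        Omega_plus_def)
qed

theorem proposition3p6:
  fixes n m :: nat and \<pi> :: "nat \<Rightarrow> nat"
  assumes "n \<ge> 1" and "m \<ge> 1" and "\<pi> permutes {1..n}"
  shows "x_lazy n m \<pi> = real (Omega n \<pi> m) / real (2*m+1) ^ n \<and>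
         x_std n m \<pi> = real (Omega_star n \<pi> m) / real (2*m) ^ n \<and>
         x_strict n m \<pi> = real (Omega_plus n \<pi> m) / real m ^ n \<and>
         y_lazy n m \<pi> = x_lazy n m (inv \<pi>) \<and>
         y_star n m \<pi> = x_std n m (inv \<pi>) \<and>
         y_plus n m \<pi> = x_strict n m (inv \<pi>)"
  using x_lazy_eq_Omega[OF assms(3)] x_std_eq_Omega_star[OF assms(3)]
    x_strict_eq_Omega_plus[OF assms(3)] y_lazy_eq_x_lazy_inv[OF assms(3)]
    y_star_eq_x_std_inv[OF assms(3)] y_plus_eq_x_strict_inv[OF assms(3)]
  by blast

end
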